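(* Let $S$ be a semigroup with finite $\mathcal{R}$-height, and let $A$ be a left ideal of $S$. Then $\mathrm{H}_{\mathcal{R}}(A)\leq 2\,\mathrm{H}_{\mathcal{R}}(S)$.
   Context: For a semigroup $S$, $S^1$ denotes $S$ with an identity adjoined if necessary. Green's preorder: $a\leq_{\mathcal{R}} b$ iff $aS^1\subseteq bS^1$; $\mathcal{R}$ is the associated equivalence; the $\mathcal{R}$-height $\mathrm{H}_{\mathcal{R}}$ of a semigroup is the supremum of the cardinalities of chains in its poset of $\mathcal{R}$-classes. A left ideal is a non-empty subset $A$ with $SA\subseteq A$; $\mathrm{H}_{\mathcal{R}}(A)$ is computed in $A$ itself. *)

theory Defs
  imports Main "HOL-Library.Extended_Nat"
begin

text \<open>Semigroups are modelled by the type class semigroup_mult; the ambient semigroup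
  S is the whole type. Green's relations are taken relative to a subsemigroup A
  (with A = UNIV giving those of S).\<close>

definition R_le_in :: "'a::semigroup_mult set \<Rightarrow> 'a \<Rightarrow> 'a \<Rightarrow> bool" where
  "R_le_in A a b \<longleftrightarrow> a = b \<or> (\<exists>c\<in>A. a = b * c)"

definition R_eq_in :: "'a::semigroup_mult set \<Rightarrow> 'a \<Rightarrow> 'a \<Rightarrow> bool" where
  "R_eq_in A a b \<longleftrightarrow> R_le_in A a b \<and> R_le_in A b a"

definition R_class_in :: "'a::semigroup_mult set \<Rightarrow> 'a \<Rightarrow> 'a set" where
  "R_class_in A a = {b \<in> A. R_eq_in A a b}"

definition R_classes :: "'a::semigroup_mult set \<Rightarrow> 'a set set" where
  "R_classes A = R_class_in A ` A"

definition R_class_le :: "'a::semigroup_mult set \<Rightarrow> 'a set \<Rightarrow> 'a set \<Rightarrow> bool" where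
  "R_class_le A X Y \<longleftrightarrow> (\<exists>x\<in>X. \<exists>y\<in>Y. R_le_in A x y)"

definition R_chain :: "'a::semigroup_mult set \<Rightarrow> 'a set set \<Rightarrow> bool" where
  "R_chain A K \<longleftrightarrow> K \<subseteq> R_classes A \<and>
     (\<forall>X\<in>K. \<forall>Y\<in>K. R_class_le A X Y \<or> R_class_le A Y X)"

definition R_height :: "'a::semigroup_mult set \<Rightarrow> enat" where
  "R_height A = (SUP K \<in> {K. R_chain A K}. (if finite K then enat (card K) else \<infinity>))"

definition left_ideal :: "'a::semigroup_mult set \<Rightarrow> bool" where
  "left_ideal A \<longleftrightarrow> A \<noteq> {} \<and> (\<forall>s a. a \<in> A \<longrightarrow> s * a \<in> A)"

end

theory Submission
  imports Defs
begin

text \<open>Map each R-class of the left ideal A to the R-class of S containing it; this sends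
  chains to chains. If q = r y with y \<in> A and r lies R-below p in S, say r = p s, then
  q = p (s y) with s y \<in> A because S A \<subseteq> A, so q already lies R-below p in A. Hence, among
  the classes of a chain of A that lie in a single R-class of S, P \<le> Q \<le> R forces P = Q or
  Q = R; so each fibre has at most two elements, and a chain of A has at most twice as many
  classes as its image in S.\<close>

lemma finite_card_le_2_if_no_two_step_path:
  assumes total: "\<And>x y. x \<in> F \<Longrightarrow> y \<in> F \<Longrightarrow> le x y \<or> le y x"
    and no_path: "\<And>p q r. p \<in> F \<Longrightarrow> q \<in> F \<Longrightarrow> r \<in> F \<Longrightarrow> le p q \<Longrightarrow> le q r \<Longrightarrow> p = q \<or> q = r"
  shows "finite F \<and> card F \<le> 2"
proof (rule ccontr)
  assume "\<not> (finite F \<and> card F \<le> 2)"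
  then obtain G where "G \<subseteq> F" "card G = 3"
    by (metis obtain_subset_with_card_n infinite_arbitrarily_large not_less_eq_eq
        numeral_2_eq_2 numeral_3_eq_3)
  then obtain x y z where "x \<in> F" "y \<in> F" "z \<in> F" "x \<noteq> y" "y \<noteq> z" "x \<noteq> z"
    by (auto simp: card_3_iff)
  \<comment> \<open>Every tournament on three vertices has a Hamiltonian path, so no transitivity is needed.\<close>
  then show False
    using total[of x y] total[of y z] total[of x z] no_path by metis
qed

lemma card_le_mult_card_image:
  assumes "finite (f ` A)"
    and "\<And>y. y \<in> f ` A \<Longrightarrow> finite {x \<in> A. f x = y} \<and> card {x \<in> A. f x = y} \<le> k"
  shows "finite A \<and> card A \<le> k * card (f ` A)"
proof
  have A_eq: "A = (\<Union>y \<in> f ` A. {x \<in> A. f x = y})" by blast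
  show "finite A" using assms by (subst A_eq) blast
  have "card A \<le> (\<Sum>y \<in> f ` A. card {x \<in> A. f x = y})"
    using card_UN_le[OF assms(1)] by (subst A_eq)
  also have "\<dots> \<le> (\<Sum>y \<in> f ` A. k)"
    using assms(2) by (intro sum_mono) blast
  also have "\<dots> = k * card (f ` A)"
    by simp
  finally show "card A \<le> k * card (f ` A)" .
qed

lemma R_le_in_refl [simp]: "R_le_in A a a"
  by (simp add: R_le_in_def)

lemma R_eq_in_refl [simp]: "R_eq_in A a a"
  by (simp add: R_eq_in_def)

lemma R_le_in_trans:
  assumes closed: "\<And>x y. x \<in> A \<Longrightarrow> y \<in> A \<Longrightarrow> x * y \<in> A"
    and "R_le_in A a b" "R_le_in A b c"
  shows "R_le_in A a c"
  using assms(2,3) closed unfolding R_le_in_def by (metis mult.assoc)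

lemma R_le_in_mono: "A \<subseteq> B \<Longrightarrow> R_le_in A a b \<Longrightarrow> R_le_in B a b"
  unfolding R_le_in_def by blast

lemma R_eq_in_mono: "A \<subseteq> B \<Longrightarrow> R_eq_in A a b \<Longrightarrow> R_eq_in B a b"
  unfolding R_eq_in_def using R_le_in_mono by blast

lemma R_class_in_self: "a \<in> A \<Longrightarrow> a \<in> R_class_in A a"
  by (simp add: R_class_in_def)

lemma R_class_in_eqI:
  assumes closed: "\<And>x y. x \<in> A \<Longrightarrow> y \<in> A \<Longrightarrow> x * y \<in> A"
    and "R_eq_in A a b"
  shows "R_class_in A a = R_class_in A b"
  using assms(2) R_le_in_trans[OF closed] unfolding R_class_in_def R_eq_in_def by blast

lemma R_class_le_R_class_in_iff:
  assumes closed: "\<And>x y. x \<in> A \<Longrightarrow> y \<in> A \<Longrightarrow> x * y \<in> A"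
    and "a \<in> A" "b \<in> A"
  shows "R_class_le A (R_class_in A a) (R_class_in A b) \<longleftrightarrow> R_le_in A a b"
proof
  assume "R_class_le A (R_class_in A a) (R_class_in A b)"
  then obtain x y where "x \<in> R_class_in A a" "y \<in> R_class_in A b" "R_le_in A x y"
    unfolding R_class_le_def by blast
  then have "R_le_in A a x" "R_le_in A x y" "R_le_in A y b"
    by (auto simp: R_class_in_def R_eq_in_def)
  then show "R_le_in A a b"
    using R_le_in_trans[OF closed] by blast
next
  assume "R_le_in A a b"
  then show "R_class_le A (R_class_in A a) (R_class_in A b)"
    using assms(2,3) R_class_in_self unfolding R_class_le_def by blast
qed

lemma left_ideal_mult_closed: "left_ideal A \<Longrightarrow> x \<in> A \<Longrightarrow> y \<in> A \<Longrightarrow> x * y \<in> A"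
  unfolding left_ideal_def by blast

lemma R_le_in_left_ideal_mult:
  assumes "left_ideal A" "R_le_in UNIV a c" "y \<in> A"
  shows "R_le_in A (a * y) c"
proof (cases "a = c")
  case True
  then show ?thesis using assms(3) unfolding R_le_in_def by blast
next
  case False
  then obtain s where "a = c * s" using assms(2) unfolding R_le_in_def by blast
  moreover have "s * y \<in> A" using assms(1,3) unfolding left_ideal_def by blast
  ultimately show ?thesis unfolding R_le_in_def by (metis mult.assoc)
qed

lemma left_ideal_R_eq_in_if_path:
  assumes "left_ideal A" "R_le_in A p q" "R_le_in A q r" "R_le_in UNIV r p"
  shows "R_eq_in A p q \<or> R_eq_in A q r"
proof (cases "q = r")
  case False
  then obtain y where "y \<in> A" "q = r * y" using assms(3) unfolding R_le_in_def by blast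
  then have "R_le_in A q p" using R_le_in_left_ideal_mult assms(1,4) by blast
  then show ?thesis using assms(2) unfolding R_eq_in_def by blast
qed simp

definition ambient_R_class :: "'a::semigroup_mult set \<Rightarrow> 'a set" where
  "ambient_R_class X = (\<Union>x \<in> X. R_class_in UNIV x)"

lemma ambient_R_class_R_class_in:
  assumes "a \<in> A"
  shows "ambient_R_class (R_class_in A a) = R_class_in UNIV a"
proof -
  have "R_class_in UNIV x = R_class_in UNIV a" if "x \<in> R_class_in A a" for x
    using that R_eq_in_mono[of A UNIV a x] R_class_in_eqI[of UNIV a x]
    by (simp add: R_class_in_def)
  then show ?thesis
    using assms R_class_in_self unfolding ambient_R_class_def by blast
qed

lemma R_chain_ambient_R_class:
  assumes closed: "\<And>x y. x \<in> A \<Longrightarrow> y \<in> A \<Longrightarrow> x * y \<in> A"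
    and chain: "R_chain A K"
  shows "R_chain UNIV (ambient_R_class ` K)"
  unfolding R_chain_def
proof (intro conjI ballI)
  have rep: "\<exists>a \<in> A. X = R_class_in A a \<and> ambient_R_class X = R_class_in UNIV a"
    if X: "X \<in> K" for X
  proof -
    obtain a where "a \<in> A" "X = R_class_in A a"
      using X chain unfolding R_chain_def R_classes_def by blast
    then show ?thesis using ambient_R_class_R_class_in by blast
  qed
  then show "ambient_R_class ` K \<subseteq> R_classes UNIV"
    unfolding R_classes_def by blast
  fix X' Y' assume "X' \<in> ambient_R_class ` K" "Y' \<in> ambient_R_class ` K"
  then obtain a b where "a \<in> A" "b \<in> A" "R_class_in A a \<in> K" "R_class_in A b \<in> K"
    and X'Y': "X' = R_class_in UNIV a" "Y' = R_class_in UNIV b"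
    using rep by (metis imageE)
  then have "R_le_in A a b \<or> R_le_in A b a"
    using chain R_class_le_R_class_in_iff[OF closed] unfolding R_chain_def by blast
  then have "R_le_in UNIV a b \<or> R_le_in UNIV b a"
    using R_le_in_mono[of A UNIV] by blast
  then show "R_class_le UNIV X' Y' \<or> R_class_le UNIV Y' X'"
    unfolding X'Y' using R_class_le_R_class_in_iff[of UNIV] by blast
qed

lemma left_ideal_card_ambient_R_class_fibre_le_2:
  assumes "left_ideal A" and chain: "R_chain A K"
  shows "finite {X \<in> K. ambient_R_class X = Y} \<and> card {X \<in> K. ambient_R_class X = Y} \<le> 2"
proof (rule finite_card_le_2_if_no_two_step_path[where le = "R_class_le A"])
  note closed = left_ideal_mult_closed[OF assms(1)]
  have rep: "\<exists>a \<in> A. X = R_class_in A a \<and> R_class_in UNIV a = Y"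
    if X: "X \<in> {X \<in> K. ambient_R_class X = Y}" for X
  proof -
    obtain a where "a \<in> A" "X = R_class_in A a"
      using X chain unfolding R_chain_def R_classes_def by blast
    then show ?thesis using X ambient_R_class_R_class_in by auto
  qed
  show "R_class_le A X X' \<or> R_class_le A X' X"
    if "X \<in> {X \<in> K. ambient_R_class X = Y}" "X' \<in> {X \<in> K. ambient_R_class X = Y}" for X X'
    using that chain unfolding R_chain_def by blast
  fix P Q R
  assume "P \<in> {X \<in> K. ambient_R_class X = Y}" "Q \<in> {X \<in> K. ambient_R_class X = Y}"
    "R \<in> {X \<in> K. ambient_R_class X = Y}"
    and PQ: "R_class_le A P Q" and QR: "R_class_le A Q R"
  then obtain p q r where pqr: "p \<in> A" "q \<in> A" "r \<in> A"
    "P = R_class_in A p" "Q = R_class_in A q" "R = R_class_in A r"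
    and "R_class_in UNIV p = Y" "R_class_in UNIV r = Y"
    using rep by meson
  then have "p \<in> R_class_in UNIV r"
    using R_class_in_self[of p UNIV] by simp
  then have "R_le_in UNIV r p"
    by (simp add: R_class_in_def R_eq_in_def)
  moreover have "R_le_in A p q" "R_le_in A q r"
    using PQ QR pqr R_class_le_R_class_in_iff[OF closed] by auto
  ultimately have "R_eq_in A p q \<or> R_eq_in A q r"
    using left_ideal_R_eq_in_if_path[OF assms(1)] by blast
  then show "P = Q \<or> Q = R"
    using pqr R_class_in_eqI[OF closed] by blast
qed

lemma R_chain_finite_card_le_R_height:
  assumes "R_height A < \<infinity>" "R_chain A K"
  shows "finite K \<and> enat (card K) \<le> R_height A"
proof -
  have "(if finite K then enat (card K) else \<infinity>) \<le> R_height A"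
    unfolding R_height_def using assms(2) by (intro SUP_upper) simp
  then show ?thesis using assms(1) by (auto split: if_splits)
qed

lemma R_height_leI:
  assumes "\<And>K. R_chain A K \<Longrightarrow> finite K \<and> enat (card K) \<le> h"
  shows "R_height A \<le> h"
  unfolding R_height_def using assms by (intro SUP_least) simp

theorem corollary3p9:
  fixes A :: "'a::semigroup_mult set"
  assumes "R_height (UNIV :: 'a set) < \<infinity>"
    and "left_ideal A"
  shows "R_height A \<le> 2 * R_height (UNIV :: 'a set)"
proof (rule R_height_leI)
  fix K assume chain: "R_chain A K"
  let ?K' = "ambient_R_class ` K"
  have "R_chain UNIV ?K'"
    using R_chain_ambient_R_class[OF left_ideal_mult_closed[OF assms(2)] chain] .
  then have fin: "finite ?K'" and height: "enat (card ?K') \<le> R_height (UNIV :: 'a set)"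
    using R_chain_finite_card_le_R_height[OF assms(1)] by blast+
  have "finite K \<and> card K \<le> 2 * card ?K'"
    using card_le_mult_card_image[OF fin]
      left_ideal_card_ambient_R_class_fibre_le_2[OF assms(2) chain] by blast
  moreover have "enat (2 * card ?K') \<le> 2 * R_height (UNIV :: 'a set)"
    using mult_left_mono[OF height, of 2] by (simp add: numeral_eq_enat)
  ultimately show "finite K \<and> enat (card K) \<le> 2 * R_height (UNIV :: 'a set)"
    by (meson enat_ord_simps(1) order_trans)
qed

end
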